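(* Let $k\ge 1$. Let $f, g_1,\ldots,g_k:(-\infty,0)\to\mathbb{R}$ and $s:[0,\infty)\to\mathbb{R}$ be ordinal decreasing functions that are strictly positive at every point of their domains. Consider the recursive algorithm \[ M(x)=\begin{cases} f(x), & x<0,\\ g_1\bigl(-M(x-g_2(-M(x-\cdots-g_k(-M(x-s(x)))\cdots)))\bigr), & x\ge 0.\end{cases} \] Then for every $x\in\mathbb{R}$ the computation of $M(x)$ halts (i.e. the recursion is well-founded and $M(x)$ is a well-defined real number), and the resulting function $M:\mathbb{R}\to\mathbb{R}$ is ordinal decreasing.
   Context: For $D\subseteq\mathbb{R}$ and $h:D\to\mathbb{R}$, a strictly decreasing sequence $x_1>x_2>x_3>\cdots$ of points of $D$ is called $h$-bad if $h(x_1)>h(x_2)>h(x_3)>\cdots$. The function $h$ is called ordinal decreasing if there is no infinite $h$-bad sequence. *)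

theory Defs
  imports Main "HOL.Real"
begin

definition ord_dec :: "real set \<Rightarrow> (real \<Rightarrow> real) \<Rightarrow> bool" where
  "ord_dec D h \<longleftrightarrow>
     \<not> (\<exists>X :: nat \<Rightarrow> real. (\<forall>n. X n \<in> D) \<and> (\<forall>n. X (Suc n) < X n)
                          \<and> (\<forall>n. h (X (Suc n)) < h (X n)))"

text \<open>Big-step (halting) semantics of the recursive algorithm
  M(x) = f(x) for x<0, and for x\<ge>0
  M(x) = g_1(-M(x - g_2(-M(x - ... - g_k(-M(x - s(x)))...)))).
  evalM f g s k x v: the computation of M(x) halts with result v (finite derivation).
  chainM f g s k x j a: the j-th intermediate value a_j of the computation of M(x), where
  a_(k+1) = s(x) and a_j = g_j(-M(x - a_(j+1))) for 1 \<le> j \<le> k; M(x) = a_1.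
  Applying g_j requires its argument to lie in its domain (-\<infinity>,0).\<close>
inductive evalM and chainM
  for f :: "real \<Rightarrow> real" and g :: "nat \<Rightarrow> real \<Rightarrow> real"
    and s :: "real \<Rightarrow> real" and k :: nat
where
  neg: "x < 0 \<Longrightarrow> evalM f g s k x (f x)"
| nonneg: "0 \<le> x \<Longrightarrow> chainM f g s k x 1 v \<Longrightarrow> evalM f g s k x v"
| start: "0 \<le> x \<Longrightarrow> chainM f g s k x (Suc k) (s x)"
| step: "1 \<le> j \<Longrightarrow> j \<le> k \<Longrightarrow> chainM f g s k x (Suc j) b \<Longrightarrow>
         evalM f g s k (x - b) m \<Longrightarrow> - m < 0 \<Longrightarrow> chainM f g s k x j (g j (- m))"

end

theory Submission
  imports Defs Complex_Main "HOL-Library.Infinite_Set"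
begin

text \<open>We show by continuity induction on \<open>t\<close> that \<open>M\<close> halts on \<open>(-\<infinity>, t)\<close> and is ordinal
  decreasing there. Given this for \<open>t \<ge> 0\<close>, the chain \<open>a\<^sub>k\<^sub>+\<^sub>1 = s\<close>,
  \<open>a\<^sub>j(x) = g\<^sub>j(-M(x - a\<^sub>j\<^sub>+\<^sub>1(x)))\<close> is computed downwards in \<open>j\<close> on a right neighbourhood
  \<open>(t, u)\<close> of \<open>t\<close>, and each \<open>a\<^sub>j\<close> is ordinal decreasing there. Two facts drive this step:
  a positive ordinal decreasing function is bounded away from \<open>0\<close> just to the right of \<open>t\<close>,
  so after shrinking \<open>u\<close> the recursive calls \<open>M(x - a\<^sub>j\<^sub>+\<^sub>1(x))\<close> land in \<open>(-\<infinity>, t)\<close>; and along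
  every strictly decreasing sequence an ordinal decreasing function is nondecreasing on a
  subsequence, which makes ordinal decrease stable under the compositions in the chain.
  Then \<open>M = a\<^sub>1\<close> halts and is ordinal decreasing on \<open>(-\<infinity>, u)\<close>.\<close>

lemma ord_decI:
  assumes "\<And>X. (\<And>n. X n \<in> D) \<Longrightarrow> (\<And>n. X (Suc n) < X n) \<Longrightarrow>
      (\<And>n. h (X (Suc n)) < h (X n)) \<Longrightarrow> False"
  shows "ord_dec D h"
  using assms unfolding ord_dec_def by blast

lemma ord_decD:
  assumes "ord_dec D h" "\<And>n. X n \<in> D" "\<And>n. X (Suc n) < X n"
    "\<And>n. h (X (Suc n)) < h (X n)"
  shows False
  using assms unfolding ord_dec_def by blast

lemma ord_dec_subset: "ord_dec D h \<Longrightarrow> D' \<subseteq> D \<Longrightarrow> ord_dec D' h"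
  unfolding ord_dec_def by blast

lemma ord_dec_cong: "ord_dec D h \<Longrightarrow> (\<And>x. x \<in> D \<Longrightarrow> h x = h' x) \<Longrightarrow> ord_dec D h'"
  unfolding ord_dec_def by (metis (no_types, lifting))

lemma lift_Suc_antimono_less:
  fixes X :: "nat \<Rightarrow> 'a::order"
  assumes "\<And>n. X (Suc n) < X n" "m < n"
  shows "X n < X m"
  using assms(2) by (induct m n rule: less_Suc_induct) (auto intro: assms(1) order.strict_trans)

lemma lift_Suc_antimono_less_subseq:
  fixes X :: "nat \<Rightarrow> 'a::order"
  assumes "\<And>n. X (Suc n) < X n" "strict_mono r"
  shows "X (r (Suc n)) < X (r n)"
  using assms by (simp add: lift_Suc_antimono_less strict_mono_Suc_iff)

lemma ord_dec_decseq:
  assumes "ord_dec D h" "\<And>n. X n \<in> D" "decseq X" "\<And>n. h (X (Suc n)) < h (X n)"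
  shows False
proof -
  have "X (Suc n) < X n" for n
  proof -
    have "X (Suc n) \<noteq> X n"
      using assms(4)[of n] by auto
    with decseq_SucD[OF assms(3)] show ?thesis
      by (simp add: order_less_le)
  qed
  then show False
    using ord_decD[of D h X] assms by blast
qed

lemma decseq_strict_subseq_or_eventually_const:
  fixes u :: "nat \<Rightarrow> 'a::linorder"
  assumes u: "decseq u"
  obtains r where "strict_mono r" "\<And>n. u (r (Suc n)) < u (r n)"
    | n0 where "\<And>n. n0 \<le> n \<Longrightarrow> u n = u n0"
proof (cases "finite {n. u (Suc n) < u n}")
  case False
  define r where "r = enumerate {n. u (Suc n) < u n}"
  have "u (r (Suc n)) < u (r n)" for n
  proof -
    have "Suc (r n) \<le> r (Suc n)"
      using strict_mono_enumerate[OF False] by (simp add: r_def strict_mono_Suc_iff Suc_leI)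
    then have "u (r (Suc n)) \<le> u (Suc (r n))"
      by (rule decseqD[OF u])
    also have "\<dots> < u (r n)"
      using enumerate_in_set[OF False] by (simp add: r_def)
    finally show ?thesis .
  qed
  with strict_mono_enumerate[OF False] show thesis
    using that(1) unfolding r_def by blast
next
  case True
  then obtain n0 where n0: "\<And>n. u (Suc n) < u n \<Longrightarrow> n < n0"
    using True unfolding finite_nat_set_iff_bounded by blast
  have "u n = u n0" if "n0 \<le> n" for n
    using that
  proof (induction n rule: dec_induct)
    case (step n)
    then show ?case
      using n0[of n] decseq_SucD[OF u, of n] by fastforce
  qed simp
  then show thesis
    by (rule that(2))
qed

lemma ord_dec_incseq_subseq:
  assumes h: "ord_dec D h" and X: "\<And>n. X n \<in> D" "\<And>n. X (Suc n) < X n"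
  shows "\<exists>r. strict_mono r \<and> incseq (\<lambda>n. h (X (r n)))"
proof -
  obtain r0 where r0: "strict_mono r0" "monoseq (\<lambda>n. h (X (r0 n)))"
    using seq_monosub[of "\<lambda>n. h (X n)"] by blast
  consider "incseq (\<lambda>n. h (X (r0 n)))" | "decseq (\<lambda>n. h (X (r0 n)))"
    using r0(2) monoseq_iff by blast
  then show ?thesis
  proof cases
    case 1
    with r0(1) show ?thesis by blast
  next
    case 2
    then show ?thesis
    proof (cases rule: decseq_strict_subseq_or_eventually_const)
      case (1 r)
      have "X (r0 (r (Suc n))) < X (r0 (r n))" for n
        using lift_Suc_antimono_less_subseq[of X, OF X(2) strict_mono_o[OF r0(1) 1(1)]] by simp
      with 1(2) have False
        by (intro ord_decD[OF h, of "\<lambda>n. X (r0 (r n))"]) (simp_all add: X(1))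
      then show ?thesis ..
    next
      case (2 n0)
      have "h (X (r0 (n + n0))) = h (X (r0 n0))" for n
        by (rule 2) simp
      then have "incseq (\<lambda>n. h (X (r0 (n + n0))))"
        by (simp add: incseq_def)
      moreover have "strict_mono (\<lambda>n. r0 (n + n0))"
        using r0(1) by (simp add: strict_mono_def)
      ultimately show ?thesis
        by blast
    qed
  qed
qed

lemma ord_dec_comp_shift:
  assumes a: "ord_dec D a" and m: "ord_dec E m" and into: "\<And>x. x \<in> D \<Longrightarrow> x - a x \<in> E"
  shows "ord_dec D (\<lambda>x. m (x - a x))"
proof (rule ord_decI)
  fix Y assume Y: "\<And>n. Y n \<in> D" "\<And>n. Y (Suc n) < Y n"
    and bad: "\<And>n. m (Y (Suc n) - a (Y (Suc n))) < m (Y n - a (Y n))"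
  obtain r where r: "strict_mono r" "incseq (\<lambda>n. a (Y (r n)))"
    using ord_dec_incseq_subseq[of D a Y] a Y by blast
  show False
  proof (rule ord_decD[OF m, of "\<lambda>n. Y (r n) - a (Y (r n))"])
    show "Y (r n) - a (Y (r n)) \<in> E" for n
      using into Y(1) by blast
    show "Y (r (Suc n)) - a (Y (r (Suc n))) < Y (r n) - a (Y (r n))" for n
      using lift_Suc_antimono_less_subseq[of Y, OF Y(2) r(1), of n] incseq_SucD[OF r(2), of n]
      by linarith
    show "m (Y (r (Suc n)) - a (Y (r (Suc n)))) < m (Y (r n) - a (Y (r n)))" for n
      using lift_Suc_antimono_less_subseq[of "\<lambda>n. m (Y n - a (Y n))", OF bad r(1)] .
  qed
qed

lemma ord_dec_comp_uminus:
  assumes h: "ord_dec D h" and g: "ord_dec F g" and into: "\<And>x. x \<in> D \<Longrightarrow> - h x \<in> F"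
  shows "ord_dec D (\<lambda>x. g (- h x))"
proof (rule ord_decI)
  fix Y assume Y: "\<And>n. Y n \<in> D" "\<And>n. Y (Suc n) < Y n"
    and bad: "\<And>n. g (- h (Y (Suc n))) < g (- h (Y n))"
  obtain r where r: "strict_mono r" "incseq (\<lambda>n. h (Y (r n)))"
    using ord_dec_incseq_subseq[of D h Y] h Y by blast
  show False
  proof (rule ord_dec_decseq[OF g, of "\<lambda>n. - h (Y (r n))"])
    show "- h (Y (r n)) \<in> F" for n
      using into Y(1) by blast
    show "decseq (\<lambda>n. - h (Y (r n)))"
      using r(2) by (simp add: incseq_def decseq_def)
    show "g (- h (Y (r (Suc n)))) < g (- h (Y (r n)))" for n
      using lift_Suc_antimono_less_subseq[of "\<lambda>n. g (- h (Y n))", OF bad r(1)] .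
  qed
qed

lemma ord_dec_pos_bounded_below:
  assumes a: "ord_dec {t<..<u} a" and "t < u" and pos: "\<And>y. y \<in> {t<..<u} \<Longrightarrow> 0 < a y"
  shows "\<exists>u'\<in>{t<..u}. \<exists>c>0. \<forall>y\<in>{t<..<u'}. c \<le> a y"
proof (rule ccontr)
  assume "\<not> ?thesis"
  then have small: "\<exists>y\<in>{t<..<u'}. a y < c" if "u' \<in> {t<..u}" "0 < c" for u' c
    using that by (meson not_le)
  have "\<exists>Y. \<forall>n. Y n \<in> {t<..<u} \<and> Y (Suc n) < Y n \<and> a (Y (Suc n)) < a (Y n)"
  proof (rule dependent_nat_choice)
    show "\<exists>x. x \<in> {t<..<u}"
      using \<open>t < u\<close> by (intro exI[of _ "(t + u) / 2"]) auto
  next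
    fix x and n :: nat assume x: "x \<in> {t<..<u}"
    then obtain y where "y \<in> {t<..<x}" "a y < a x"
      using small[of x "a x"] pos by auto
    with x show "\<exists>y. y \<in> {t<..<u} \<and> y < x \<and> a y < a x" by auto
  qed
  then show False
    using ord_decD[OF a] by metis
qed

lemma ord_dec_lessThan_extend:
  assumes below: "ord_dec {..<t} h" and right: "ord_dec {t<..<u} h"
  shows "ord_dec {..<u} h"
proof (rule ord_decI)
  fix X assume X: "\<And>n. X n \<in> {..<u}" "\<And>n. X (Suc n) < X n"
    and bad: "\<And>n. h (X (Suc n)) < h (X n)"
  show False
  proof (cases "\<exists>N. X N \<le> t")
    case True
    then obtain N where N: "X N \<le> t" by blast
    show False
    proof (rule ord_decD[OF below, of "\<lambda>n. X (n + Suc N)"])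
      show "X (n + Suc N) \<in> {..<t}" for n
        using lift_Suc_antimono_less[of X, OF X(2), of N "n + Suc N"] N by simp
    qed (use X(2) bad in simp_all)
  next
    case False
    show False
    proof (rule ord_decD[OF right, of X])
      show "X n \<in> {t<..<u}" for n
        using False X(1)[of n] by (auto simp: not_le)
    qed (use X(2) bad in simp_all)
  qed
qed

lemma ord_dec_from_lessThan:
  assumes "\<And>u. u \<in> U \<Longrightarrow> ord_dec {..<u} h" and "\<And>x. x \<in> D \<Longrightarrow> \<exists>u\<in>U. x < u"
  shows "ord_dec D h"
proof (rule ord_decI)
  fix X :: "nat \<Rightarrow> real" assume X: "\<And>n. X n \<in> D" "\<And>n. X (Suc n) < X n"
    and bad: "\<And>n. h (X (Suc n)) < h (X n)"
  obtain u where u: "u \<in> U" "X 0 < u"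
    using assms(2) X(1) by blast
  show False
  proof (rule ord_decD[OF assms(1)[OF u(1)], of X])
    show "X n \<in> {..<u}" for n
      using lift_Suc_antimono_le[of X 0 n] X(2) u(2) by (simp add: less_imp_le)
  qed (use X(2) bad in simp_all)
qed

lemma real_upward_induct:
  fixes P :: "real \<Rightarrow> bool"
  assumes base: "P a" and down: "\<And>x y. x \<le> y \<Longrightarrow> P y \<Longrightarrow> P x"
    and step: "\<And>t. a \<le> t \<Longrightarrow> (\<And>x. x < t \<Longrightarrow> P x) \<Longrightarrow> \<exists>u>t. P u"
  shows "P x"
proof (rule ccontr)
  assume "\<not> P x"
  then have bdd: "bdd_above (Collect P)"
    using down by (metis bdd_aboveI mem_Collect_eq nle_le)
  define t where "t = Sup (Collect P)"
  have "a \<le> t"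
    unfolding t_def using base bdd by (simp add: cSup_upper)
  moreover have "P y" if "y < t" for y
    using that less_cSup_iff[of "Collect P" y] base bdd down unfolding t_def
    by (metis empty_iff less_imp_le mem_Collect_eq)
  ultimately obtain u where "t < u" "P u"
    using step by blast
  then show False
    using cSup_upper[OF _ bdd, of u] unfolding t_def by simp
qed

locale ord_dec_recursion =
  fixes f :: "real \<Rightarrow> real" and g :: "nat \<Rightarrow> real \<Rightarrow> real"
    and s :: "real \<Rightarrow> real" and k :: nat
  assumes k_pos: "1 \<le> k"
    and f_ord_dec: "ord_dec {..<0} f" and f_pos: "\<And>x. x < 0 \<Longrightarrow> 0 < f x"
    and g_ord_dec: "\<And>j. j \<in> {1..k} \<Longrightarrow> ord_dec {..<0} (g j)"
    and g_pos: "\<And>j x. j \<in> {1..k} \<Longrightarrow> x < 0 \<Longrightarrow> 0 < g j x"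
    and s_ord_dec: "ord_dec {0..} s" and s_pos: "\<And>x. 0 \<le> x \<Longrightarrow> 0 < s x"
begin

abbreviation halts :: "real \<Rightarrow> bool" where
  "halts x \<equiv> \<exists>v. evalM f g s k x v"

definition M :: "real \<Rightarrow> real" where
  "M x = (THE v. evalM f g s k x v)"

lemma evalM_chainM_pos:
  shows "evalM f g s k x v \<Longrightarrow> 0 < v"
    and "chainM f g s k x j a \<Longrightarrow> 0 < a"
  by (induction rule: evalM_chainM.inducts) (auto intro: f_pos g_pos s_pos)

lemma evalM_chainM_unique:
  shows "evalM f g s k x v \<Longrightarrow> evalM f g s k x v' \<Longrightarrow> v' = v"
    and "chainM f g s k x j a \<Longrightarrow> chainM f g s k x j a' \<Longrightarrow> a' = a"
proof (induction arbitrary: v' and a' rule: evalM_chainM.inducts)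
  case (neg x)
  from neg.prems show ?case
  proof cases
    case nonneg
    with neg.hyps show ?thesis by simp
  qed simp
next
  case (nonneg x v)
  from nonneg.prems show ?case
  proof cases
    case neg
    with nonneg.hyps show ?thesis by simp
  next
    case nonneg
    then show ?thesis using nonneg.IH by blast
  qed
next
  case (start x)
  from start.prems show ?case
    by cases simp_all
next
  case (step j x b m)
  note IH = step.IH
  from step.prems show ?case
  proof cases
    case (step b' m')
    then have "b' = b" using IH by blast
    with step have "m' = m" using IH by blast
    with step show ?thesis by simp
  qed (use \<open>j \<le> k\<close> in simp)
qed

lemma M_eq: "evalM f g s k x v \<Longrightarrow> M x = v"
  unfolding M_def by (rule the_equality) (use evalM_chainM_unique(1) in blast)+

lemma M_neg: "x < 0 \<Longrightarrow> M x = f x"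
  by (rule M_eq[OF evalM_chainM.neg])

lemma halts_evalM_M: "halts x \<Longrightarrow> evalM f g s k x (M x)"
  using M_eq by blast

lemma halts_M_pos: "halts x \<Longrightarrow> 0 < M x"
  using halts_evalM_M evalM_chainM_pos(1) by blast

lemma halts_if_halts_below:
  assumes x: "0 \<le> x" and below: "\<And>y. y < x \<Longrightarrow> halts y"
  shows "halts x"
proof -
  have chain: "\<exists>a. chainM f g s k x j a" if "1 \<le> j" "j \<le> Suc k" for j
    using that(2)
  proof (induction j rule: inc_induct)
    case base
    show ?case
      using evalM_chainM.start[OF x] by blast
  next
    case (step j')
    then obtain b where b: "chainM f g s k x (Suc j') b" by blast
    then have "0 < b"
      by (rule evalM_chainM_pos(2))
    then obtain m where m: "evalM f g s k (x - b) m"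
      using below[of "x - b"] by auto
    have "1 \<le> j'" "j' \<le> k"
      using step.hyps that(1) by auto
    then have "chainM f g s k x j' (g j' (- m))"
      using evalM_chainM.step[OF _ _ b m] evalM_chainM_pos(1)[OF m] by simp
    then show ?case by blast
  qed
  obtain a where "chainM f g s k x 1 a"
    using chain[of 1] k_pos by auto
  then show ?thesis
    using evalM_chainM.nonneg[OF x] by blast
qed

lemma chainM_near_right:
  assumes t: "0 \<le> t" and halts_below: "\<And>x. x < t \<Longrightarrow> halts x"
    and M_ord_dec: "ord_dec {..<t} M" and j1: "1 \<le> j" and "j \<le> Suc k"
  shows "\<exists>u>t. \<exists>a. (\<forall>y\<in>{t<..<u}. chainM f g s k y j (a y)) \<and> ord_dec {t<..<u} a"
  using \<open>j \<le> Suc k\<close>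
proof (induction j rule: inc_induct)
  case base
  have "ord_dec {t<..<t + 1} s"
    by (rule ord_dec_subset[OF s_ord_dec]) (use t in auto)
  moreover have "chainM f g s k y (Suc k) (s y)" if "y \<in> {t<..<t + 1}" for y
    using evalM_chainM.start that t by auto
  ultimately show ?case
    by (intro exI[of _ "t + 1"] exI[of _ s] conjI) auto
next
  case (step j)
  have j: "j \<in> {1..k}"
    using step.hyps j1 by auto
  obtain u a where u: "t < u" and a_chain: "\<And>y. y \<in> {t<..<u} \<Longrightarrow> chainM f g s k y (Suc j) (a y)"
    and a_ord_dec: "ord_dec {t<..<u} a"
    using step.IH by blast
  obtain u' c where u': "u' \<in> {t<..u}" and c: "0 < c" "\<And>y. y \<in> {t<..<u'} \<Longrightarrow> c \<le> a y"
    using ord_dec_pos_bounded_below[OF a_ord_dec u] evalM_chainM_pos(2)[OF a_chain] by blast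
  define v where "v = min u' (t + c)"
  define a' where "a' y = g j (- M (y - a y))" for y
  have in_u: "y \<in> {t<..<u}" if "y \<in> {t<..<v}" for y
    using that u' by (auto simp: v_def)
  have call_halts: "halts (y - a y)" if "y \<in> {t<..<v}" for y
    using halts_below that c(2)[of y] by (auto simp: v_def)
  have "chainM f g s k y j (a' y)" if "y \<in> {t<..<v}" for y
    unfolding a'_def
    using evalM_chainM.step[OF _ _ a_chain[OF in_u[OF that]] halts_evalM_M[OF call_halts[OF that]]]
      halts_M_pos[OF call_halts[OF that]] j by auto
  moreover have "ord_dec {t<..<v} a'"
    unfolding a'_def
  proof (rule ord_dec_comp_uminus[OF _ g_ord_dec[OF j]])
    show "ord_dec {t<..<v} (\<lambda>y. M (y - a y))"
    proof (rule ord_dec_comp_shift[OF ord_dec_subset[OF a_ord_dec] M_ord_dec])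
      show "y - a y \<in> {..<t}" if "y \<in> {t<..<v}" for y
        using that c(2)[of y] by (auto simp: v_def)
    qed (use in_u in blast)
    show "- M (y - a y) \<in> {..<0}" if "y \<in> {t<..<v}" for y
      using halts_M_pos[OF call_halts[OF that]] by simp
  qed
  moreover have "t < v"
    using u' c by (auto simp: v_def)
  ultimately show ?case
    by blast
qed

lemma halts_ord_dec_extend:
  assumes t: "0 \<le> t" and halts_below: "\<And>x. x < t \<Longrightarrow> halts x"
    and M_ord_dec: "ord_dec {..<t} M"
  shows "\<exists>u>t. (\<forall>x<u. halts x) \<and> ord_dec {..<u} M"
proof -
  obtain u a where u: "t < u" and a_chain: "\<And>y. y \<in> {t<..<u} \<Longrightarrow> chainM f g s k y 1 (a y)"
    and a_ord_dec: "ord_dec {t<..<u} a"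
    using chainM_near_right[OF t halts_below M_ord_dec order.refl le_SucI[OF k_pos]] by blast
  have eval: "evalM f g s k y (a y)" if "y \<in> {t<..<u}" for y
    by (rule evalM_chainM.nonneg[OF _ a_chain[OF that]]) (use that t in simp)
  have "halts x" if x: "x < u" for x
  proof (cases "x < t")
    case True
    then show ?thesis using halts_below by blast
  next
    case False
    then consider "x = t" | "x \<in> {t<..<u}"
      using x by fastforce
    then show ?thesis
    proof cases
      case 1
      then show ?thesis using halts_if_halts_below[OF t halts_below] by simp
    next
      case 2
      then show ?thesis using eval by blast
    qed
  qed
  moreover have "ord_dec {..<u} M"
  proof (rule ord_dec_lessThan_extend[OF M_ord_dec ord_dec_cong[OF a_ord_dec]])
    show "a y = M y" if "y \<in> {t<..<u}" for y
      using M_eq[OF eval[OF that]] by simp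
  qed
  ultimately show ?thesis
    using u by blast
qed

lemma halts_and_ord_dec: "(\<forall>x. halts x) \<and> ord_dec UNIV M"
proof -
  define P where "P t \<longleftrightarrow> (\<forall>x<t. halts x) \<and> ord_dec {..<t} M" for t
  have P: "P t" for t
  proof (rule real_upward_induct[of P 0])
    have "halts x" if "x < 0" for x
      using evalM_chainM.neg[OF that] by blast
    moreover have "ord_dec {..<0} M"
      by (rule ord_dec_cong[OF f_ord_dec]) (simp add: M_neg)
    ultimately show "P 0"
      unfolding P_def by blast
  next
    fix x y :: real
    assume "x \<le> y" "P y"
    then have "\<forall>z<x. halts z" and "ord_dec {..<y} M"
      unfolding P_def by auto
    moreover have "{..<x} \<subseteq> {..<y}"
      using \<open>x \<le> y\<close> by auto
    ultimately show "P x"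
      unfolding P_def using ord_dec_subset by blast
  next
    fix t :: real
    assume "0 \<le> t" and below: "\<And>x. x < t \<Longrightarrow> P x"
    have "halts x" if "x < t" for x
    proof -
      have "x < (x + t) / 2" "(x + t) / 2 < t"
        using that by auto
      then show ?thesis
        using below[of "(x + t) / 2"] unfolding P_def by blast
    qed
    moreover have "ord_dec {..<t} M"
    proof (rule ord_dec_from_lessThan[of "{..<t}"])
      show "ord_dec {..<u} M" if "u \<in> {..<t}" for u
        using below[of u] that unfolding P_def by simp
      show "\<exists>u\<in>{..<t}. x < u" if "x \<in> {..<t}" for x
        using dense[of x t] that by auto
    qed
    ultimately obtain u where "t < u" "\<forall>x<u. halts x" "ord_dec {..<u} M"
      using halts_ord_dec_extend[OF \<open>0 \<le> t\<close>] by blast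
    then show "\<exists>u>t. P u"
      unfolding P_def by blast
  qed
  have "halts x" for x
    using P[of "x + 1"] unfolding P_def by simp
  moreover have "ord_dec UNIV M"
  proof (rule ord_dec_from_lessThan[of UNIV])
    show "ord_dec {..<u} M" for u
      using P[of u] unfolding P_def by simp
    show "\<exists>u\<in>UNIV. x < u" for x :: real
      using gt_ex by blast
  qed
  ultimately show ?thesis
    by blast
qed
end

theorem theorem1:
  fixes f :: "real \<Rightarrow> real" and g :: "nat \<Rightarrow> real \<Rightarrow> real"
    and s :: "real \<Rightarrow> real" and k :: nat
  assumes "k \<ge> 1"
    and "ord_dec {..<0} f" and "\<forall>x<0. f x > 0"
    and "\<forall>j\<in>{1..k}. ord_dec {..<0} (g j)"
    and "\<forall>j\<in>{1..k}. \<forall>x<0. g j x > 0"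
    and "ord_dec {0..} s" and "\<forall>x\<ge>0. s x > 0"
  shows "(\<forall>x. \<exists>!v. evalM f g s k x v)
         \<and> ord_dec UNIV (\<lambda>x. THE v. evalM f g s k x v)"
proof -
  interpret ord_dec_recursion f g s k
    using assms by unfold_locales auto
  from halts_and_ord_dec have halts: "\<And>x. halts x" and M_ord_dec: "ord_dec UNIV M"
    by auto
  have "\<exists>!v. evalM f g s k x v" for x
    by (rule ex_ex1I[OF halts]) (use evalM_chainM_unique(1) in blast)
  moreover have "ord_dec UNIV (\<lambda>x. THE v. evalM f g s k x v)"
    using M_ord_dec unfolding M_def[abs_def] .
  ultimately show ?thesis
    by blast
qed

end
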